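(* Consider the normalised two-player, two-market Cournot game with per-period utility $u(x,a)=-2x(x+a)$ for a player playing $x$ against an opponent playing $a$. Let player 2's initial strategy be $a_0\in[-1,1]$. The players update alternately by myopic best response (a player facing opponent strategy $a$ switches to $-a/2$): at time $t=0$ player 1 updates, at $t=1$ player 2 updates, at $t=2$ player 1 updates, and so on. Let $u_t$ denote player 1's one-period utility at time $t$, evaluated at both players' strategies after the update at time $t$, and let $$g=u(-a_0/2,a_0)-u(-a_0,a_0)\ \ (\ge 0)$$ be the utility gained at the first move by the myopic best response relative to the equilibrium-mimicking response $-a_0$ (which yields utility $0$). Then $$\sum_{t=0}^{\infty}u_t=\frac{8g}{15},$$ which is strictly positive whenever $a_0\neq 0$.
   Context: Two players each have one unit of a homogeneous good (zero production and transportation cost) to split between two markets with inverse-linear demand. Strategies are normalised to numbers in $[-1,1]$ with $0$ the unique Cournot equilibrium split, and the normalised one-period utility (relative to the equilibrium utility, which is normalised to $0$) of a player playing $x$ against an opponent playing $a$ is $u(x,a)=-2x(x+a)$. An equilibrium-mimicking strategy profile is one in which every market receives the same total supply as it would in equilibrium; against opponent strategy $a_0$ this corresponds to playing $-a_0$, giving utility $0$. The myopic best response to $a$ is the maximiser of $u(\cdot,a)$, namely $-a/2$. *)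

theory Defs
  imports Complex_Main
begin

definition cu :: "real \<Rightarrow> real \<Rightarrow> real" where
  "cu x a = -2 * x * (x + a)"

definition br :: "real \<Rightarrow> real" where
  "br a = - a / 2"

text \<open>Strategy profile (player 1, player 2) after the update at time t,
  starting from player 2's initial strategy a0. Player 1 updates at even
  times, player 2 at odd times.\<close>
fun profile :: "real \<Rightarrow> nat \<Rightarrow> real \<times> real" where
  "profile a0 0 = (br a0, a0)"
| "profile a0 (Suc t) =
     (let (x, a) = profile a0 t in
      if even (Suc t) then (br a, a) else (x, br x))"

end

theory Submission
  imports Defs
begin

text \<open>Two consecutive best-response updates scale the whole profile by \<open>1/4\<close>, because
  \<open>br (br a) = a / 4\<close>. Utility is a quadratic form, so the utility sequence satisfies
  \<open>u (t + 2) = u t / 16\<close>: the series splits into two geometric series starting at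
  \<open>u 0 = g\<close> and \<open>u 1 = - g / 2\<close>, with total \<open>(g - g / 2) * 16 / 15 = 8 g / 15\<close>.
  Finally \<open>g = a0\<^sup>2 / 2\<close>, since the equilibrium-mimicking response earns \<open>0\<close>.\<close>

lemma sums_even_odd:
  fixes f :: "nat \<Rightarrow> real"
  assumes "(\<lambda>k. f (2 * k)) sums A" and "(\<lambda>k. f (2 * k + 1)) sums B"
  shows "f sums (A + B)"
proof -
  have "(\<lambda>n. if even n then f (2 * (n div 2)) else f (2 * ((n - 1) div 2) + 1)) sums (B + A)"
    using sums_if[OF assms(2) assms(1)] .
  moreover have "(\<lambda>n. if even n then f (2 * (n div 2)) else f (2 * ((n - 1) div 2) + 1)) = f"
    by (rule ext) (auto elim: oddE)
  ultimately show ?thesis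
    by (simp add: add.commute)
qed

lemma two_step_recurrence_power:
  fixes f :: "nat \<Rightarrow> real"
  assumes "\<And>t. f (Suc (Suc t)) = r * f t"
  shows "f (2 * k + j) = r ^ k * f j"
  by (induction k) (simp_all add: assms)

lemma sums_two_step_geometric:
  fixes f :: "nat \<Rightarrow> real"
  assumes "\<And>t. f (Suc (Suc t)) = r * f t" and "\<bar>r\<bar> < 1"
  shows "f sums ((f 0 + f 1) / (1 - r))"
proof -
  have "(\<lambda>k. f (2 * k + j)) sums (f j / (1 - r))" for j
    using sums_mult2[OF geometric_sums[OF \<open>\<bar>r\<bar> < 1\<close>[folded real_norm_def]], of "f j"]
      two_step_recurrence_power[of f r, OF assms(1)] by simp
  from sums_even_odd[OF this[of 0, simplified] this[of 1]] show ?thesis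
    by (simp add: add_divide_distrib)
qed

lemma br_br: "br (br a) = a / 4"
  by (simp add: br_def)

lemma cu_divide: "cu (x / c) (a / c) = cu x a / c\<^sup>2"
  by (cases "c = 0") (simp_all add: cu_def power2_eq_square field_simps)

lemma profile_best_response:
  "profile a0 t = (if even t then (br (snd (profile a0 t)), snd (profile a0 t))
                   else (fst (profile a0 t), br (fst (profile a0 t))))"
  by (cases t) (auto split: prod.splits)

lemma profile_Suc_Suc:
  "profile a0 (Suc (Suc t)) = (fst (profile a0 t) / 4, snd (profile a0 t) / 4)"
  using profile_best_response[of a0 t] by (auto simp: br_br split: prod.splits if_splits)

theorem theorem4:
  fixes a0 g :: real
  assumes "a0 \<in> {-1..1}"
    and "g = cu (br a0) a0 - cu (- a0) a0"
  shows "(\<lambda>t. cu (fst (profile a0 t)) (snd (profile a0 t))) sums (8 * g / 15) \<and>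
         (a0 \<noteq> 0 \<longrightarrow> 8 * g / 15 > 0)"
proof -
  define u where "u t = cu (fst (profile a0 t)) (snd (profile a0 t))" for t
  have g: "g = a0\<^sup>2 / 2"
    using assms(2) by (simp add: cu_def br_def power2_eq_square)
  have "u (Suc (Suc t)) = 1 / 16 * u t" for t
    unfolding u_def profile_Suc_Suc by (simp add: cu_divide)
  then have "u sums ((u 0 + u 1) / (1 - 1 / 16))"
    by (rule sums_two_step_geometric) simp
  moreover have "(u 0 + u 1) / (1 - 1 / 16) = 8 * g / 15"
    by (simp add: u_def g cu_def br_def power2_eq_square)
  ultimately have "u sums (8 * g / 15)"
    by (simp only:)
  moreover have "a0 \<noteq> 0 \<longrightarrow> 8 * g / 15 > 0"
    by (simp add: g)
  ultimately show ?thesis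
    unfolding u_def[abs_def] by blast
qed

end
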